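(* Let $\sigma$ be any of the softmax, softmax-1 or Bayes-softmax activations. Then for all $m\in\mathbb R^{H\times F}$, $b\in\mathbb R^H$, $v\in\mathbb R$, the gradient of the reparameterized loss with respect to $r$ vanishes at $r=0$: $\nabla_r\tilde{\mathcal E}_\sigma(m,0,b,v)=0$.
   Context: Fix integers $L,H,F\ge1$ and a distribution $P_\theta$ on $\mathbb R^F$. For $m\in\mathbb R^{H\times F}$, $r\in\mathbb R^{H\times H}$ symmetric, $b\in\mathbb R^H$, $v\in\mathbb R$: $\tilde{\mathcal E}_\sigma(m,r,b,v)=\mathbb E\big[\sum_{\ell=1}^L(\delta_{\ell,\epsilon}-\frac1H\sum_{h=1}^H\sigma(\chi,b,v;h)_\ell)^2\big]$, $\chi_{h\ell}=\sum_fm_{hf}\chi^*_{f\ell}+\sum_{h'}r_{hh'}\xi_{h'\ell}$, with $\epsilon\sim\mathrm{Unif}(\{1,\dots,L\})$, $\theta\sim P_\theta$, and conditionally independent $\chi^*_{:\ell}\sim\mathcal N(\delta_{\ell,\epsilon}\theta,I_F)$, $\xi_{:\ell}\sim\mathcal N(0,I_H)$. Activations: softmax $\sigma(\chi,b,v;h)_\ell=e^{\chi_{h\ell}}/\sum_{\ell'}e^{\chi_{h\ell'}}$; softmax-1 $v e^{\chi_{h\ell}}/(e^{b_h}+\sum_{\ell'}e^{\chi_{h\ell'}})$; Bayes-softmax $e^{\chi_{h\ell}+b_h}/(\frac1H\sum_{h'}\sum_{\ell'}e^{\chi_{h'\ell'}+b_{h'}})$. *)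

theory Defs
  imports "HOL-Analysis.Analysis" "HOL-Probability.Probability"
begin

text \<open>Index types: 'l = positions {1..L}, 'h = heads {1..H}, 'f = features {1..F}.
  All are finite (hence nonempty, so L,H,F >= 1).\<close>

type_synonym ('l,'h) activation = "real^'l^'h \<Rightarrow> real^'h \<Rightarrow> real \<Rightarrow> 'h \<Rightarrow> 'l \<Rightarrow> real"

definition softmax :: "('l::finite,'h::finite) activation" where
  "softmax chi b v h l = exp (chi$h$l) / (\<Sum>l'\<in>UNIV. exp (chi$h$l'))"

definition softmax1 :: "('l::finite,'h::finite) activation" where
  "softmax1 chi b v h l = v * exp (chi$h$l) / (exp (b$h) + (\<Sum>l'\<in>UNIV. exp (chi$h$l')))"

definition bayes_softmax :: "('l::finite,'h::finite) activation" where
  "bayes_softmax chi b v h l = exp (chi$h$l + b$h) /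
     ((1 / real CARD('h)) * (\<Sum>h'\<in>UNIV. \<Sum>l'\<in>UNIV. exp (chi$h'$l' + b$h')))"

definition scores :: "real^'f^'h \<Rightarrow> real^'h^'h \<Rightarrow> real^'l^'f \<Rightarrow> real^'l^'h \<Rightarrow> real^'l^'h" where
  "scores m r cs xi = (\<chi> h l. (\<Sum>f\<in>UNIV. m$h$f * cs$f$l) + (\<Sum>h'\<in>UNIV. r$h$h' * xi$h'$l))"

definition sample_loss ::
  "('l::finite,'h::finite) activation \<Rightarrow> real^'f^'h \<Rightarrow> real^'h^'h \<Rightarrow> real^'h \<Rightarrow> real
     \<Rightarrow> 'l \<Rightarrow> real^'l^'f \<Rightarrow> real^'l^'h \<Rightarrow> real" where
  "sample_loss \<sigma> m r b v eps cs xi =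
     (\<Sum>l\<in>UNIV. ((if l = eps then 1 else 0)
        - (1 / real CARD('h)) * (\<Sum>h\<in>UNIV. \<sigma> (scores m r cs xi) b v h l))\<^sup>2)"

definition chistar_density :: "'l \<Rightarrow> real^'f \<Rightarrow> real^'l^'f \<Rightarrow> real" where
  "chistar_density eps theta cs =
     (\<Prod>f\<in>UNIV. \<Prod>l\<in>UNIV. normal_density (if l = eps then theta$f else 0) 1 (cs$f$l))"

definition xi_density :: "real^'l^'h \<Rightarrow> real" where
  "xi_density xi = (\<Prod>h\<in>UNIV. \<Prod>l\<in>UNIV. std_normal_density (xi$h$l))"

text \<open>Reparameterized loss: eps ~ Unif('l), theta ~ P, then chi*, xi conditionally independent Gaussians.\<close>
definition reparam_loss ::
  "('l::finite,'h::finite) activation \<Rightarrow> (real^'f::finite) measure \<Rightarrow> real^'f^'h \<Rightarrow> real^'h^'h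
     \<Rightarrow> real^'h \<Rightarrow> real \<Rightarrow> real" where
  "reparam_loss \<sigma> P m r b v =
     (1 / real CARD('l)) * (\<Sum>eps\<in>UNIV.
        \<integral>theta. (\<integral>cs. (\<integral>xi. sample_loss \<sigma> m r b v eps cs xi * chistar_density eps theta cs
                                 * xi_density xi \<partial>lborel) \<partial>lborel) \<partial>P)"

end

theory Submission
  imports Defs
begin

(* The loss is an average, over epsilon, theta and chi*, of the Gaussian smoothing
   J(r, A) = E_xi[l(A + r xi)] of a bounded, Lipschitz and differentiable function l of the score
   matrix, evaluated at A = m chi*.  Differentiating under the integral sign, the derivative of J at
   r = 0 is r |-> E_xi[Dl(A)(r xi)], which vanishes because xi |-> r xi is odd while the Gaussian
   density is even.  Since J is bounded and Lipschitz at r = 0 uniformly in A, dominated convergence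
   carries the vanishing derivative through the remaining averages over chi* and theta. *)

section \<open>Differentiation under the integral sign\<close>

lemma tendsto_integral_dominated_at:
  fixes s :: "'r::first_countable_topology \<Rightarrow> 'a \<Rightarrow> 'b::{banach, second_countable_topology}"
  assumes meas: "\<And>t. s t \<in> borel_measurable M" and "f \<in> borel_measurable M"
    and w: "integrable M w"
    and lim: "\<And>x. x \<in> space M \<Longrightarrow> ((\<lambda>t. s t x) \<longlongrightarrow> f x) (at a)"
    and bound: "\<And>t x. t \<noteq> a \<Longrightarrow> x \<in> space M \<Longrightarrow> norm (s t x) \<le> w x"
  shows "((\<lambda>t. \<integral>x. s t x \<partial>M) \<longlongrightarrow> (\<integral>x. f x \<partial>M)) (at a)"
proof (subst tendsto_at_iff_sequentially, intro allI impI)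
  fix X :: "nat \<Rightarrow> 'r" assume X: "\<forall>i. X i \<in> UNIV - {a}" "X \<longlonglongrightarrow> a"
  then have X_at: "filterlim X (at a) sequentially"
    by (auto simp: filterlim_at)
  show "((\<lambda>t. \<integral>x. s t x \<partial>M) \<circ> X) \<longlonglongrightarrow> (\<integral>x. f x \<partial>M)"
    unfolding comp_def
  proof (rule integral_dominated_convergence[OF \<open>f \<in> _\<close> meas w])
    show "AE x in M. (\<lambda>i. s (X i) x) \<longlonglongrightarrow> f x"
      using filterlim_compose[OF lim X_at] by auto
    show "AE x in M. norm (s (X i) x) \<le> w x" for i
      using X bound by auto
  qed
qed

lemma abs_derivative_le_lipschitz:
  fixes f :: "'r::real_normed_vector \<Rightarrow> real"
  assumes f: "(f has_derivative f') (at a)"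
    and lip: "\<And>r. \<bar>f r - f a\<bar> \<le> norm (r - a) * c"
  shows "\<bar>f' h\<bar> \<le> norm h * c"
proof -
  have line: "((\<lambda>t. a + t *\<^sub>R h) has_derivative (\<lambda>t. t *\<^sub>R h)) (at 0)"
    by (auto intro!: derivative_eq_intros)
  have "(f has_derivative f') (at ((\<lambda>t. a + t *\<^sub>R h) 0))"
    using f by simp
  from has_derivative_compose[OF line this]
  have "((\<lambda>t. f (a + t *\<^sub>R h)) has_derivative (\<lambda>t. f' (t *\<^sub>R h))) (at 0)" .
  then have "((\<lambda>t. f (a + t *\<^sub>R h)) has_real_derivative f' h) (at 0)"
    unfolding has_field_derivative_def
    by (rule has_derivative_eq_rhs) (simp add: fun_eq_iff linear.scaleR[OF has_derivative_linear[OF f]])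
  then have "((\<lambda>t. (f (a + t *\<^sub>R h) - f a) / t) \<longlongrightarrow> f' h) (at 0)"
    by (simp add: DERIV_def)
  moreover have "\<forall>\<^sub>F t in at 0. \<bar>(f (a + t *\<^sub>R h) - f a) / t\<bar> \<le> norm h * c"
    unfolding eventually_at_filter
  proof (intro always_eventually allI impI)
    fix t :: real assume "t \<noteq> 0"
    show "\<bar>(f (a + t *\<^sub>R h) - f a) / t\<bar> \<le> norm h * c"
      using lip[of "a + t *\<^sub>R h"] \<open>t \<noteq> 0\<close> by (simp add: abs_divide divide_le_eq mult_ac)
  qed
  ultimately show ?thesis
    using tendsto_le[OF at_neq_bot tendsto_const tendsto_rabs] by blast
qed

lemma abs_integral_diff_le:
  fixes f g :: "'a \<Rightarrow> real"
  assumes "integrable M f" "integrable M g" "integrable M C"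
    and "\<And>x. x \<in> space M \<Longrightarrow> \<bar>f x - g x\<bar> \<le> C x"
  shows "\<bar>(\<integral>x. f x \<partial>M) - (\<integral>x. g x \<partial>M)\<bar> \<le> (\<integral>x. C x \<partial>M)"
proof -
  have "\<bar>(\<integral>x. f x \<partial>M) - (\<integral>x. g x \<partial>M)\<bar> = \<bar>\<integral>x. f x - g x \<partial>M\<bar>"
    using assms by simp
  also have "\<dots> \<le> (\<integral>x. \<bar>f x - g x\<bar> \<partial>M)"
    using integral_norm_bound[of M "\<lambda>x. f x - g x"] by simp
  also have "\<dots> \<le> (\<integral>x. C x \<partial>M)"
    using assms by (intro integral_mono) auto
  finally show ?thesis .
qed

lemma bounded_linear_integral:
  fixes G :: "'a \<Rightarrow> 'r::real_normed_vector \<Rightarrow> real"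
  assumes lin: "\<And>x. x \<in> space M \<Longrightarrow> linear (G x)"
    and int: "\<And>h. integrable M (\<lambda>x. G x h)"
    and bound: "\<And>x h. x \<in> space M \<Longrightarrow> \<bar>G x h\<bar> \<le> norm h * C x"
    and C: "integrable M C"
  shows "bounded_linear (\<lambda>h. \<integral>x. G x h \<partial>M)"
proof (rule bounded_linear_intro)
  show "(\<integral>x. G x (h + k) \<partial>M) = (\<integral>x. G x h \<partial>M) + (\<integral>x. G x k \<partial>M)" for h k
  proof -
    have "(\<integral>x. G x (h + k) \<partial>M) = (\<integral>x. G x h + G x k \<partial>M)"
      by (intro Bochner_Integration.integral_cong refl linear_add[OF lin])
    then show ?thesis
      using int by simp
  qed
  show "(\<integral>x. G x (t *\<^sub>R h) \<partial>M) = t *\<^sub>R (\<integral>x. G x h \<partial>M)" for t h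
  proof -
    have "(\<integral>x. G x (t *\<^sub>R h) \<partial>M) = (\<integral>x. t * G x h \<partial>M)"
      by (intro Bochner_Integration.integral_cong refl) (simp add: linear.scaleR[OF lin])
    then show ?thesis
      by simp
  qed
  show "norm (\<integral>x. G x h \<partial>M) \<le> norm h * (\<integral>x. C x \<partial>M)" for h
    using abs_integral_diff_le[OF int integrable_zero integrable_mult_right[OF C]] bound
    by simp
qed

lemma has_derivative_integral:
  fixes g :: "'r::real_normed_vector \<Rightarrow> 'a \<Rightarrow> real"
  assumes int: "\<And>r. integrable M (g r)"
    and G_meas: "\<And>r. (\<lambda>x. G x r) \<in> borel_measurable M"
    and deriv: "\<And>x. x \<in> space M \<Longrightarrow> ((\<lambda>r. g r x) has_derivative G x) (at a)"
    and lip: "\<And>r x. x \<in> space M \<Longrightarrow> \<bar>g r x - g a x\<bar> \<le> norm (r - a) * C x"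
    and C: "integrable M C"
  shows "((\<lambda>r. \<integral>x. g r x \<partial>M) has_derivative (\<lambda>r. \<integral>x. G x r \<partial>M)) (at a)"
proof -
  have G_le: "\<bar>G x h\<bar> \<le> norm h * C x" if "x \<in> space M" for x h
    by (rule abs_derivative_le_lipschitz[OF deriv[OF that] lip[OF that]])
  have G_int: "integrable M (\<lambda>x. G x h)" for h
    by (rule Bochner_Integration.integrable_bound[OF integrable_mult_right[OF C, of "norm h"] G_meas])
      (auto intro!: AE_I2 order_trans[OF G_le abs_ge_self])
  have G_lin: "linear (G x)" if "x \<in> space M" for x
    using deriv[OF that] by (rule has_derivative_linear)
  have "bounded_linear (\<lambda>h. \<integral>x. G x h \<partial>M)"
    by (rule bounded_linear_integral[OF G_lin G_int G_le C])
  moreover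
  define q where "q h x = (g (a + h) x - g a x - G x h) / norm h" for h x
  have lim: "((\<lambda>h. \<integral>x. q h x \<partial>M) \<longlongrightarrow> (\<integral>x. 0 \<partial>M)) (at 0)"
  proof (rule tendsto_integral_dominated_at[where w="\<lambda>x. 2 * C x"])
    show "q h \<in> borel_measurable M" for h
      unfolding q_def
      by (intro borel_measurable_divide borel_measurable_diff borel_measurable_const G_meas
          borel_measurable_integrable[OF int])
    show "((\<lambda>h. q h x) \<longlongrightarrow> 0) (at 0)" if "x \<in> space M" for x
    proof (rule tendsto_norm_zero_cancel)
      have "((\<lambda>h. norm (g (a + h) x - g a x - G x h) / norm h) \<longlongrightarrow> 0) (at 0)"
        using deriv[OF that] unfolding has_derivative_at by blast
      then show "((\<lambda>h. norm (q h x)) \<longlongrightarrow> 0) (at 0)"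
        by (simp add: q_def norm_divide)
    qed
    show "norm (q h x) \<le> 2 * C x" if "h \<noteq> 0" "x \<in> space M" for h x
    proof -
      have "\<bar>g (a + h) x - g a x - G x h\<bar> \<le> \<bar>g (a + h) x - g a x\<bar> + \<bar>G x h\<bar>"
        by (rule abs_triangle_ineq4)
      also have "\<dots> \<le> 2 * C x * norm h"
        using lip[of x "a + h"] G_le[of x h] that by (simp add: algebra_simps)
      finally show ?thesis
        using that by (simp add: q_def abs_divide divide_le_eq)
    qed
  qed (use C in auto)
  have "((\<lambda>h. norm ((\<integral>x. g (a + h) x \<partial>M) - (\<integral>x. g a x \<partial>M) - (\<integral>x. G x h \<partial>M)) / norm h)
      \<longlongrightarrow> 0) (at 0)"
    using tendsto_norm_zero[OF lim[unfolded integral_zero]] int G_int by (simp add: q_def norm_divide)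
  ultimately show ?thesis
    unfolding has_derivative_at by simp
qed

lemma borel_measurable_integral_kernel:
  fixes k :: "'p::euclidean_space \<Rightarrow> 'x::euclidean_space \<Rightarrow> real"
  assumes sets: "sets P = sets borel" and g: "g \<in> borel_measurable borel"
    and k: "continuous_on UNIV (\<lambda>z. k (fst z) (snd z))"
  shows "(\<lambda>\<theta>. \<integral>x. g x * k \<theta> x \<partial>lborel) \<in> borel_measurable P"
proof -
  have "sets (P \<Otimes>\<^sub>M (lborel :: 'x measure)) = sets (borel \<Otimes>\<^sub>M (borel :: 'x measure))"
    by (rule sets_pair_measure_cong[OF sets sets_lborel])
  also have "\<dots> = sets (borel :: ('p \<times> 'x) measure)"
    by (rule arg_cong[where f=sets, OF borel_prod])
  finally have prod_sets: "sets (P \<Otimes>\<^sub>M (lborel :: 'x measure)) = sets (borel :: ('p \<times> 'x) measure)" .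
  have "(\<lambda>z. g (snd z)) \<in> borel_measurable (borel :: ('p \<times> 'x) measure)"
    using g by (rule measurable_compose[OF borel_measurable_continuous_onI[OF continuous_on_snd[OF continuous_on_id]]])
  moreover have "(\<lambda>z. k (fst z) (snd z)) \<in> borel_measurable (borel :: ('p \<times> 'x) measure)"
    using k by (rule borel_measurable_continuous_onI)
  ultimately have "(\<lambda>(\<theta>, x). g x * k \<theta> x) \<in> borel_measurable (P \<Otimes>\<^sub>M lborel)"
    unfolding measurable_cong_sets[OF prod_sets refl] case_prod_beta' by (rule borel_measurable_times)
  then show ?thesis
    by (rule lborel.borel_measurable_lebesgue_integral)
qed

(* The invariant carried from the innermost Gaussian average through the averages over chi* and
   theta. *)
definition flat_at_zero :: "real \<Rightarrow> real \<Rightarrow> ('r::real_normed_vector \<Rightarrow> real) \<Rightarrow> bool" where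
  "flat_at_zero B C f \<longleftrightarrow>
     (\<forall>r. \<bar>f r\<bar> \<le> B) \<and> (\<forall>r. \<bar>f r - f 0\<bar> \<le> C * norm r) \<and> (f has_derivative (\<lambda>_. 0)) (at 0)"

lemma flat_at_zero_weighted_integral:
  fixes g :: "'r::real_normed_vector \<Rightarrow> 'a \<Rightarrow> real"
  assumes w: "integrable M w" "\<And>x. 0 \<le> w x" "(\<integral>x. w x \<partial>M) = 1"
    and meas: "\<And>r. g r \<in> borel_measurable M"
    and flat: "\<And>x. x \<in> space M \<Longrightarrow> flat_at_zero B C (\<lambda>r. g r x)"
  shows "flat_at_zero B C (\<lambda>r. \<integral>x. g r x * w x \<partial>M)"
proof -
  have bound: "\<bar>g r x\<bar> \<le> B" and lip: "\<bar>g r x - g 0 x\<bar> \<le> C * norm r"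
    and deriv: "((\<lambda>r. g r x) has_derivative (\<lambda>_. 0)) (at 0)" if "x \<in> space M" for r x
    using flat[OF that] by (auto simp: flat_at_zero_def)
  have int: "integrable M (\<lambda>x. g r x * w x)" for r
  proof (rule Bochner_Integration.integrable_bound[OF integrable_mult_right[OF w(1), of B]])
    show "(\<lambda>x. g r x * w x) \<in> borel_measurable M"
      using meas w(1) by measurable
    show "AE x in M. norm (g r x * w x) \<le> norm (B * w x)"
      using w(2) by (auto intro!: AE_I2 mult_right_mono order_trans[OF bound abs_ge_self] simp: abs_mult)
  qed
  have "\<bar>(\<integral>x. g r x * w x \<partial>M) - (\<integral>x. 0 \<partial>M)\<bar> \<le> (\<integral>x. B * w x \<partial>M)" for r
    using w(2) bound
    by (intro abs_integral_diff_le int integrable_mult_right w(1)) (auto intro: mult_right_mono simp: abs_mult)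
  moreover have "\<bar>(\<integral>x. g r x * w x \<partial>M) - (\<integral>x. g 0 x * w x \<partial>M)\<bar> \<le> (\<integral>x. C * norm r * w x \<partial>M)" for r
    using w(2) lip
    by (intro abs_integral_diff_le int integrable_mult_right w(1))
      (auto intro: mult_right_mono simp: abs_mult left_diff_distrib[symmetric])
  moreover have "((\<lambda>r. \<integral>x. g r x * w x \<partial>M) has_derivative (\<lambda>r. \<integral>x. 0 * w x \<partial>M)) (at 0)"
  proof (rule has_derivative_integral[where C="\<lambda>x. C * w x"])
    show "((\<lambda>r. g r x * w x) has_derivative (\<lambda>r. 0 * w x)) (at 0)" if "x \<in> space M" for x
      using has_derivative_mult_left[OF deriv[OF that]] .
    show "\<bar>g r x * w x - g 0 x * w x\<bar> \<le> norm (r - 0) * (C * w x)" if "x \<in> space M" for r x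
    proof -
      have "\<bar>g r x * w x - g 0 x * w x\<bar> = \<bar>g r x - g 0 x\<bar> * w x"
        by (simp add: left_diff_distrib[symmetric] abs_mult w(2))
      also have "\<dots> \<le> C * norm r * w x"
        by (rule mult_right_mono[OF lip[OF that] w(2)])
      finally show ?thesis
        by (simp add: mult_ac)
    qed
  qed (use int w(1) in auto)
  ultimately show ?thesis
    using w(3) by (simp add: flat_at_zero_def)
qed

section \<open>Gaussian densities\<close>

lemma
  fixes f :: "'a::euclidean_space \<Rightarrow> real \<Rightarrow> real"
  assumes int: "\<And>b. b \<in> Basis \<Longrightarrow> integrable lborel (f b)"
  shows integrable_lborel_prod_Basis: "integrable lborel (\<lambda>x::'a. \<Prod>b\<in>Basis. f b (x \<bullet> b))"
    and integral_lborel_prod_Basis: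
      "(\<integral>x. (\<Prod>b\<in>Basis. f b (x \<bullet> b)) \<partial>(lborel::'a measure)) = (\<Prod>b\<in>Basis. \<integral>t. f b t \<partial>lborel)"
proof -
  interpret product_sigma_finite "\<lambda>_::'a. lborel :: real measure"
    by standard
  have [measurable]: "f b \<in> borel_measurable borel" if "b \<in> Basis" for b
    using int[OF that] by auto
  have meas: "(\<lambda>x::'a. \<Prod>b\<in>Basis. f b (x \<bullet> b)) \<in> borel_measurable borel"
    by measurable
  have sum_Basis: "(\<lambda>y. \<Prod>b\<in>Basis. f b ((\<Sum>b'\<in>Basis. y b' *\<^sub>R b') \<bullet> b)) = (\<lambda>y. \<Prod>b\<in>Basis. f b (y b))"
    by (intro ext prod.cong refl) (simp add: inner_sum_left inner_Basis if_distrib cong: if_cong)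
  have coords: "(\<lambda>y. \<Sum>b\<in>Basis. y b *\<^sub>R b) \<in> (\<Pi>\<^sub>M b\<in>Basis. lborel) \<rightarrow>\<^sub>M (borel :: 'a measure)"
    by measurable
  have lborel_coords: "(lborel :: 'a measure) = distr (\<Pi>\<^sub>M b\<in>Basis. lborel) borel (\<lambda>y. \<Sum>b\<in>Basis. y b *\<^sub>R b)"
    by (rule lborel_eq)
  show "integrable lborel (\<lambda>x::'a. \<Prod>b\<in>Basis. f b (x \<bullet> b))"
    unfolding lborel_coords integrable_distr_eq[OF coords meas] sum_Basis
    by (rule product_integrable_prod) (auto intro: int)
  show "(\<integral>x. (\<Prod>b\<in>Basis. f b (x \<bullet> b)) \<partial>(lborel::'a measure)) = (\<Prod>b\<in>Basis. \<integral>t. f b t \<partial>lborel)"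
    unfolding lborel_coords integral_distr[OF coords meas] sum_Basis
    by (rule product_integral_prod) (auto intro: int)
qed

lemma integral_lborel_odd_eq_0:
  fixes g :: "'a::euclidean_space \<Rightarrow> real"
  assumes [measurable]: "g \<in> borel_measurable borel" and odd: "\<And>x. g (- x) = - g x"
  shows "(\<integral>x. g x \<partial>lborel) = 0"
proof -
  have reflect: "distr lborel borel uminus = (lborel :: 'a measure)"
    using lborel_affine[of "-1::real" "0::'a"] by (simp add: density_1)
  have "(\<integral>x. g x \<partial>lborel) = (\<integral>x. g x \<partial>(distr lborel borel uminus))"
    by (simp add: reflect)
  also have "\<dots> = - (\<integral>x. g x \<partial>lborel)"
    by (subst integral_distr) (auto simp: odd)
  finally show ?thesis
    by simp
qed

definition gaussian_density :: "'a::euclidean_space \<Rightarrow> 'a \<Rightarrow> real" where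
  "gaussian_density \<mu> x = (\<Prod>b\<in>Basis. normal_density (\<mu> \<bullet> b) 1 (x \<bullet> b))"

lemma gaussian_density_nonneg: "0 \<le> gaussian_density \<mu> x"
  by (simp add: gaussian_density_def prod_nonneg)

lemma borel_measurable_gaussian_density [measurable]: "gaussian_density \<mu> \<in> borel_measurable borel"
  unfolding gaussian_density_def[abs_def] normal_density_def
  by (intro borel_measurable_continuous_onI continuous_intros) auto

lemma integrable_gaussian_density: "integrable lborel (gaussian_density \<mu>)"
  unfolding gaussian_density_def[abs_def] by (rule integrable_lborel_prod_Basis) simp

lemma integral_gaussian_density: "(\<integral>x. gaussian_density \<mu> x \<partial>lborel) = 1"
  unfolding gaussian_density_def by (subst integral_lborel_prod_Basis) simp_all

lemma gaussian_density_0_uminus: "gaussian_density 0 (- x) = gaussian_density 0 x"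
  by (simp add: gaussian_density_def normal_density_def)

lemma integrable_norm_gaussian_density:
  "integrable lborel (\<lambda>x::'a::euclidean_space. norm x * gaussian_density 0 x)"
proof (rule Bochner_Integration.integrable_bound)
  have "integrable lborel (\<lambda>x::'a. gaussian_density 0 x * \<bar>x \<bullet> b\<bar>)" if "b \<in> Basis" for b
  proof -
    have "gaussian_density 0 x * \<bar>x \<bullet> b\<bar> =
        (\<Prod>b'\<in>Basis. std_normal_density (x \<bullet> b') * (if b' = b then \<bar>x \<bullet> b'\<bar> else 1))" for x
      using that by (simp add: gaussian_density_def prod.distrib prod.delta)
    moreover have "integrable lborel
        (\<lambda>x::'a. \<Prod>b'\<in>Basis. std_normal_density (x \<bullet> b') * (if b' = b then \<bar>x \<bullet> b'\<bar> else 1))"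
    proof (rule integrable_lborel_prod_Basis)
      show "integrable lborel (\<lambda>t. std_normal_density t * (if b' = b then \<bar>t\<bar> else 1))" for b'
        using integrable_std_normal_moment_abs[of 1] by (cases "b' = b") simp_all
    qed
    ultimately show ?thesis
      by simp
  qed
  then show "integrable lborel (\<lambda>x::'a. \<Sum>b\<in>Basis. gaussian_density 0 x * \<bar>x \<bullet> b\<bar>)"
    by (intro Bochner_Integration.integrable_sum)
  have bound: "norm (norm x * gaussian_density 0 x) \<le> norm (\<Sum>b\<in>Basis. gaussian_density 0 x * \<bar>x \<bullet> b\<bar>)"
    for x :: 'a
  proof -
    have "norm (norm x * gaussian_density 0 x) = norm x * gaussian_density 0 x"
      by (simp add: gaussian_density_nonneg)
    also have "\<dots> \<le> (\<Sum>b\<in>Basis. \<bar>x \<bullet> b\<bar>) * gaussian_density 0 x"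
      by (intro mult_right_mono norm_le_l1 gaussian_density_nonneg)
    also have "\<dots> = (\<Sum>b\<in>Basis. gaussian_density 0 x * \<bar>x \<bullet> b\<bar>)"
      by (subst mult.commute) (rule sum_distrib_left)
    also have "\<dots> \<le> norm (\<Sum>b\<in>Basis. gaussian_density 0 x * \<bar>x \<bullet> b\<bar>)"
      unfolding real_norm_def by (rule abs_ge_self)
    finally show ?thesis .
  qed
  show "AE x in (lborel::'a measure). norm (norm x * gaussian_density 0 x)
      \<le> norm (\<Sum>b\<in>Basis. gaussian_density 0 x * \<bar>x \<bullet> b\<bar>)"
    by (rule AE_I2) (rule bound)
qed measurable

lemma bij_betw_matrix_Basis:
  "bij_betw (\<lambda>(h, l). axis h (axis l 1)) UNIV (Basis :: (real^'l::finite^'h::finite) set)"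
  unfolding bij_betw_def
proof
  show "inj (\<lambda>(h, l). axis h (axis l (1::real)) :: real^'l^'h)"
    by (auto simp: inj_def axis_eq_axis)
  show "range (\<lambda>(h, l). axis h (axis l (1::real))) = (Basis :: (real^'l^'h) set)"
    by (auto simp: Basis_vec_def)
qed

lemma prod_matrix_Basis:
  "(\<Prod>b\<in>(Basis :: (real^'l::finite^'h::finite) set). f b) = (\<Prod>h\<in>UNIV. \<Prod>l\<in>UNIV. f (axis h (axis l 1)))"
proof -
  have "(\<Prod>b\<in>(Basis :: (real^'l^'h) set). f b) = (\<Prod>q\<in>UNIV. f ((\<lambda>(h, l). axis h (axis l 1)) q))"
    by (rule prod.reindex_bij_betw[OF bij_betw_matrix_Basis, symmetric])
  also have "\<dots> = (\<Prod>(h, l)\<in>UNIV \<times> UNIV. f (axis h (axis l 1)))"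
    by (simp add: case_prod_unfold)
  also have "\<dots> = (\<Prod>h\<in>UNIV. \<Prod>l\<in>UNIV. f (axis h (axis l 1)))"
    by (rule prod.cartesian_product[symmetric])
  finally show ?thesis .
qed

lemma xi_density_eq_gaussian: "xi_density = gaussian_density 0"
  unfolding xi_density_def gaussian_density_def prod_matrix_Basis
  by (intro ext prod.cong refl) (simp add: inner_axis)

lemma chistar_density_eq_gaussian:
  "chistar_density eps \<theta> = gaussian_density (\<chi> f l. if l = eps then \<theta>$f else 0)"
  unfolding chistar_density_def gaussian_density_def prod_matrix_Basis
  by (intro ext prod.cong refl) (simp add: inner_axis)

section \<open>Symmetric smoothing\<close>

lemma integrable_smoothing_integrand:
  fixes f :: "'b::real_normed_vector \<Rightarrow> real"
  assumes \<psi>: "integrable lborel \<psi>" "\<And>\<xi>. 0 \<le> \<psi> \<xi>"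
    and f: "\<And>y. \<bar>f y\<bar> \<le> B" "continuous_on UNIV f"
    and c: "continuous_on UNIV (c :: 'x::euclidean_space \<Rightarrow> 'b)"
  shows "integrable lborel (\<lambda>\<xi>. f (A + c \<xi>) * \<psi> \<xi>)"
proof (rule Bochner_Integration.integrable_bound[OF integrable_mult_right[OF \<psi>(1), of B]])
  have "continuous_on UNIV (\<lambda>\<xi>. f (A + c \<xi>))"
    by (rule continuous_on_compose2[OF f(2) continuous_on_add[OF continuous_on_const c]]) auto
  then show "(\<lambda>\<xi>. f (A + c \<xi>) * \<psi> \<xi>) \<in> borel_measurable lborel"
    using borel_measurable_continuous_onI borel_measurable_integrable[OF \<psi>(1)]
    by (intro borel_measurable_times) simp_all
  show "AE \<xi> in lborel. norm (f (A + c \<xi>) * \<psi> \<xi>) \<le> norm (B * \<psi> \<xi>)"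
    using \<psi>(2) by (intro AE_I2) (auto intro!: mult_right_mono order_trans[OF f(1) abs_ge_self] simp: abs_mult)
qed

lemma smoothing_has_derivative_zero:
  fixes f :: "'b::real_normed_vector \<Rightarrow> real"
    and \<beta> :: "'r::real_normed_vector \<Rightarrow> 'x::euclidean_space \<Rightarrow> 'b"
  assumes \<beta>: "bounded_bilinear \<beta>" and f: "(f has_derivative D) (at A)"
    and \<psi>: "\<psi> \<in> borel_measurable borel" "\<And>\<xi>. \<psi> (- \<xi>) = \<psi> \<xi>"
    and int: "\<And>r. integrable lborel (\<lambda>\<xi>. f (A + \<beta> r \<xi>) * \<psi> \<xi>)"
    and lip: "\<And>r \<xi>. \<bar>f (A + \<beta> r \<xi>) * \<psi> \<xi> - f A * \<psi> \<xi>\<bar> \<le> norm r * C \<xi>"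
    and C: "integrable lborel C"
  shows "((\<lambda>r. \<integral>\<xi>. f (A + \<beta> r \<xi>) * \<psi> \<xi> \<partial>lborel) has_derivative (\<lambda>_. 0)) (at 0)"
proof -
  interpret \<beta>: bounded_bilinear \<beta> by (fact \<beta>)
  have D: "bounded_linear D"
    using f by (rule has_derivative_bounded_linear)
  have D_meas: "(\<lambda>\<xi>. D (\<beta> r \<xi>) * \<psi> \<xi>) \<in> borel_measurable borel" for r
  proof (rule borel_measurable_times[OF borel_measurable_continuous_onI \<psi>(1)])
    show "continuous_on UNIV (\<lambda>\<xi>. D (\<beta> r \<xi>))"
      by (rule continuous_on_compose2[OF linear_continuous_on[OF D]
            linear_continuous_on[OF \<beta>.bounded_linear_right]]) auto
  qed
  have "((\<lambda>r. \<integral>\<xi>. f (A + \<beta> r \<xi>) * \<psi> \<xi> \<partial>lborel) has_derivative (\<lambda>r. \<integral>\<xi>. D (\<beta> r \<xi>) * \<psi> \<xi> \<partial>lborel))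
      (at 0)"
  proof (rule has_derivative_integral[OF int _ _ _ C])
    show "((\<lambda>r. f (A + \<beta> r \<xi>) * \<psi> \<xi>) has_derivative (\<lambda>r. D (\<beta> r \<xi>) * \<psi> \<xi>)) (at 0)" for \<xi>
    proof -
      have "((\<lambda>r. A + \<beta> r \<xi>) has_derivative (\<lambda>r. 0 + \<beta> r \<xi>)) (at 0)"
        by (rule has_derivative_add[OF has_derivative_const
              bounded_linear_imp_has_derivative[OF \<beta>.bounded_linear_left]])
      moreover have "(f has_derivative D) (at ((\<lambda>r. A + \<beta> r \<xi>) 0))"
        using f by (simp add: \<beta>.zero_left)
      ultimately show ?thesis
        using has_derivative_compose by (intro has_derivative_mult_left) fastforce
    qed
  qed (use D_meas lip in \<open>auto simp: \<beta>.zero_left\<close>)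
  moreover have "(\<integral>\<xi>. D (\<beta> r \<xi>) * \<psi> \<xi> \<partial>lborel) = 0" for r
    using D_meas
    by (rule integral_lborel_odd_eq_0)
      (simp add: \<beta>.minus_right \<psi>(2) linear_neg[OF bounded_linear.linear[OF D]])
  ultimately show ?thesis
    by simp
qed

lemma abs_smoothing_diff_le:
  fixes f :: "'b::real_normed_vector \<Rightarrow> real"
  assumes f: "K-lipschitz_on UNIV f" and \<beta>: "norm (\<beta> r \<xi>) \<le> norm r * norm \<xi> * K\<beta>"
    and \<psi>: "0 \<le> \<psi> \<xi>"
  shows "\<bar>f (A + \<beta> r \<xi>) * \<psi> \<xi> - f A * \<psi> \<xi>\<bar> \<le> norm r * (K * K\<beta> * (norm \<xi> * \<psi> \<xi>))"
proof -
  have "\<bar>f (A + \<beta> r \<xi>) - f A\<bar> \<le> K * norm (\<beta> r \<xi>)"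
    using lipschitz_on_normD[OF f, of "A + \<beta> r \<xi>" A] by simp
  also have "\<dots> \<le> K * (norm r * norm \<xi> * K\<beta>)"
    using \<beta> lipschitz_on_nonneg[OF f] by (intro mult_left_mono) auto
  finally have "\<bar>f (A + \<beta> r \<xi>) - f A\<bar> * \<psi> \<xi> \<le> K * (norm r * norm \<xi> * K\<beta>) * \<psi> \<xi>"
    by (rule mult_right_mono[OF _ \<psi>])
  then have "\<bar>f (A + \<beta> r \<xi>) * \<psi> \<xi> - f A * \<psi> \<xi>\<bar> \<le> K * (norm r * norm \<xi> * K\<beta>) * \<psi> \<xi>"
    by (simp add: left_diff_distrib[symmetric] abs_mult \<psi>)
  also have "\<dots> = norm r * (K * K\<beta> * (norm \<xi> * \<psi> \<xi>))"
    by (simp add: mult_ac)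
  finally show ?thesis .
qed

lemma flat_at_zero_smoothing:
  fixes f :: "'b::real_normed_vector \<Rightarrow> real"
    and \<beta> :: "'r::real_normed_vector \<Rightarrow> 'x::euclidean_space \<Rightarrow> 'b"
  assumes \<beta>: "bounded_bilinear \<beta>"
    and f: "\<And>y. \<bar>f y\<bar> \<le> B" "K-lipschitz_on UNIV f" "\<And>y. f differentiable (at y)"
    and \<psi>: "integrable lborel \<psi>" "\<And>\<xi>. 0 \<le> \<psi> \<xi>" "(\<integral>\<xi>. \<psi> \<xi> \<partial>lborel) = 1"
      "\<And>\<xi>. \<psi> (- \<xi>) = \<psi> \<xi>" "integrable lborel (\<lambda>\<xi>. norm \<xi> * \<psi> \<xi>)"
  obtains C where "\<And>A. flat_at_zero B C (\<lambda>r. \<integral>\<xi>. f (A + \<beta> r \<xi>) * \<psi> \<xi> \<partial>lborel)"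
proof -
  interpret \<beta>: bounded_bilinear \<beta> by (fact \<beta>)
  obtain K\<beta> where K\<beta>: "\<And>r \<xi>. norm (\<beta> r \<xi>) \<le> norm r * norm \<xi> * K\<beta>"
    using \<beta>.bounded by blast
  define c where "c \<xi> = K * K\<beta> * (norm \<xi> * \<psi> \<xi>)" for \<xi>
  have f_cont: "continuous_on UNIV f"
    using f(2) by (rule lipschitz_on_continuous_on)
  have "flat_at_zero B (\<integral>\<xi>. c \<xi> \<partial>lborel) (\<lambda>r. \<integral>\<xi>. f (A + \<beta> r \<xi>) * \<psi> \<xi> \<partial>lborel)" for A
  proof -
    have int: "integrable lborel (\<lambda>\<xi>. f (A + \<beta> r \<xi>) * \<psi> \<xi>)" for r
      by (rule integrable_smoothing_integrand[OF \<psi>(1,2) f(1) f_cont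
            linear_continuous_on[OF \<beta>.bounded_linear_right]])
    have lip: "\<bar>f (A + \<beta> r \<xi>) * \<psi> \<xi> - f A * \<psi> \<xi>\<bar> \<le> norm r * c \<xi>" for r \<xi>
      unfolding c_def by (rule abs_smoothing_diff_le[OF f(2) K\<beta> \<psi>(2)])
    have c: "integrable lborel c"
      unfolding c_def using \<psi>(5) by simp
    have "\<bar>(\<integral>\<xi>. f (A + \<beta> r \<xi>) * \<psi> \<xi> \<partial>lborel) - (\<integral>\<xi>. 0 \<partial>(lborel :: 'x measure))\<bar> \<le> (\<integral>\<xi>. B * \<psi> \<xi> \<partial>lborel)" for r
      using \<psi>(2) f(1)
      by (intro abs_integral_diff_le int integrable_mult_right \<psi>(1)) (auto intro: mult_right_mono simp: abs_mult)
    moreover have "\<bar>(\<integral>\<xi>. f (A + \<beta> r \<xi>) * \<psi> \<xi> \<partial>lborel) - (\<integral>\<xi>. f (A + \<beta> 0 \<xi>) * \<psi> \<xi> \<partial>lborel)\<bar>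
        \<le> (\<integral>\<xi>. norm r * c \<xi> \<partial>lborel)" for r
      using lip by (intro abs_integral_diff_le int integrable_mult_right c) (simp add: \<beta>.zero_left)
    moreover obtain D where "(f has_derivative D) (at A)"
      using f(3) unfolding differentiable_def by blast
    ultimately show ?thesis
      using smoothing_has_derivative_zero[OF \<beta> _ _ \<psi>(4) int lip c] \<psi>(1,3)
      by (auto simp: flat_at_zero_def mult.commute)
  qed
  then show ?thesis
    using that by blast
qed

lemma continuous_on_smoothing:
  fixes f :: "'b::real_normed_vector \<Rightarrow> real"
  assumes f: "\<And>y. \<bar>f y\<bar> \<le> B" "K-lipschitz_on UNIV f"
    and \<psi>: "integrable lborel \<psi>" "\<And>\<xi>. 0 \<le> \<psi> \<xi>" "(\<integral>\<xi>. \<psi> \<xi> \<partial>lborel) = 1"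
    and c: "continuous_on UNIV c"
  shows "continuous_on UNIV (\<lambda>A. \<integral>\<xi>. f (A + c \<xi>) * \<psi> \<xi> \<partial>lborel)"
proof -
  have int: "integrable lborel (\<lambda>\<xi>. f (A + c \<xi>) * \<psi> \<xi>)" for A
    by (rule integrable_smoothing_integrand[OF \<psi>(1,2) f(1) lipschitz_on_continuous_on[OF f(2)] c])
  have "K-lipschitz_on UNIV (\<lambda>A. \<integral>\<xi>. f (A + c \<xi>) * \<psi> \<xi> \<partial>lborel)"
  proof (rule lipschitz_onI)
    fix A A'
    have "\<bar>(\<integral>\<xi>. f (A + c \<xi>) * \<psi> \<xi> \<partial>lborel) - (\<integral>\<xi>. f (A' + c \<xi>) * \<psi> \<xi> \<partial>lborel)\<bar>
        \<le> (\<integral>\<xi>. K * dist A A' * \<psi> \<xi> \<partial>lborel)"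
    proof (intro abs_integral_diff_le int integrable_mult_right \<psi>(1))
      fix \<xi>
      have "\<bar>f (A + c \<xi>) - f (A' + c \<xi>)\<bar> * \<psi> \<xi> \<le> K * dist A A' * \<psi> \<xi>"
        using lipschitz_onD[OF f(2), of "A + c \<xi>" "A' + c \<xi>"]
        by (intro mult_right_mono \<psi>(2)) (simp_all add: dist_real_def dist_norm)
      then show "\<bar>f (A + c \<xi>) * \<psi> \<xi> - f (A' + c \<xi>) * \<psi> \<xi>\<bar> \<le> K * dist A A' * \<psi> \<xi>"
        by (simp add: left_diff_distrib[symmetric] abs_mult \<psi>(2))
    qed
    then show "dist (\<integral>\<xi>. f (A + c \<xi>) * \<psi> \<xi> \<partial>lborel) (\<integral>\<xi>. f (A' + c \<xi>) * \<psi> \<xi> \<partial>lborel) \<le> K * dist A A'"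
      using \<psi>(3) by (simp add: dist_real_def)
  qed (use lipschitz_on_nonneg[OF f(2)] in simp)
  then show ?thesis
    by (rule lipschitz_on_continuous_on)
qed

section \<open>The activations and the loss\<close>

definition bounded_lipschitz :: "('a::metric_space \<Rightarrow> real) \<Rightarrow> bool" where
  "bounded_lipschitz f \<longleftrightarrow> (\<exists>B. \<forall>x. \<bar>f x\<bar> \<le> B) \<and> (\<exists>C. C-lipschitz_on UNIV f)"

lemma bounded_lipschitz_const: "bounded_lipschitz (\<lambda>x. c)"
  unfolding bounded_lipschitz_def using lipschitz_on_constant by blast

lemma bounded_lipschitz_add:
  assumes "bounded_lipschitz f" "bounded_lipschitz g"
  shows "bounded_lipschitz (\<lambda>x. f x + g x)"
proof -
  obtain A C B D where "\<And>x. \<bar>f x\<bar> \<le> A" "C-lipschitz_on UNIV f" "\<And>x. \<bar>g x\<bar> \<le> B" "D-lipschitz_on UNIV g"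
    using assms unfolding bounded_lipschitz_def by blast
  then have "\<bar>f x + g x\<bar> \<le> A + B" for x
    by (meson abs_triangle_ineq add_mono order_trans)
  with lipschitz_on_add[OF \<open>C-lipschitz_on UNIV f\<close> \<open>D-lipschitz_on UNIV g\<close>] show ?thesis
    unfolding bounded_lipschitz_def by blast
qed

lemma bounded_lipschitz_mult:
  assumes "bounded_lipschitz f" "bounded_lipschitz g"
  shows "bounded_lipschitz (\<lambda>x. f x * g x)"
proof -
  obtain A C B D where fA: "\<And>x. \<bar>f x\<bar> \<le> A" and C: "C-lipschitz_on UNIV f"
    and gB: "\<And>x. \<bar>g x\<bar> \<le> B" and D: "D-lipschitz_on UNIV g"
    using assms unfolding bounded_lipschitz_def by blast
  have A0: "0 \<le> A" and B0: "0 \<le> B"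
    using fA[of undefined] gB[of undefined] abs_ge_zero[of "f undefined"] abs_ge_zero[of "g undefined"]
    by linarith+
  have "(A * D + B * C)-lipschitz_on UNIV (\<lambda>x. f x * g x)"
  proof (rule lipschitz_onI)
    fix x y
    have "dist (f x * g x) (f y * g y) = \<bar>f x * (g x - g y) + g y * (f x - f y)\<bar>"
      by (simp add: dist_real_def algebra_simps)
    also have "\<dots> \<le> \<bar>f x\<bar> * dist (g x) (g y) + \<bar>g y\<bar> * dist (f x) (f y)"
      by (metis abs_mult abs_triangle_ineq dist_real_def)
    also have "\<dots> \<le> A * (D * dist x y) + B * (C * dist x y)"
      using fA gB A0 B0 lipschitz_onD[OF C] lipschitz_onD[OF D]
      by (intro add_mono mult_mono) auto
    finally show "dist (f x * g x) (f y * g y) \<le> (A * D + B * C) * dist x y"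
      by (simp add: algebra_simps)
    show "0 \<le> A * D + B * C"
      using A0 B0 lipschitz_on_nonneg[OF C] lipschitz_on_nonneg[OF D] by simp
  qed
  moreover have "\<bar>f x * g x\<bar> \<le> A * B" for x
    unfolding abs_mult using fA gB A0 B0 by (intro mult_mono) auto
  ultimately show ?thesis
    unfolding bounded_lipschitz_def by blast
qed

lemma bounded_lipschitz_diff:
  assumes "bounded_lipschitz f" "bounded_lipschitz g"
  shows "bounded_lipschitz (\<lambda>x. f x - g x)"
  using bounded_lipschitz_add[OF assms(1) bounded_lipschitz_mult[OF bounded_lipschitz_const assms(2)], of "-1"]
  by simp

lemma bounded_lipschitz_sum:
  "finite I \<Longrightarrow> (\<And>i. i \<in> I \<Longrightarrow> bounded_lipschitz (f i)) \<Longrightarrow> bounded_lipschitz (\<lambda>x. \<Sum>i\<in>I. f i x)"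
  by (induction I rule: finite_induct) (auto intro: bounded_lipschitz_const bounded_lipschitz_add)

lemma exp_ratio_bounds:
  fixes u :: "'i \<Rightarrow> real"
  assumes "finite T" "p \<in> T" "0 \<le> \<alpha>"
  shows "0 < exp (u p) / (\<alpha> + (\<Sum>i\<in>T. exp (u i)))" "exp (u p) / (\<alpha> + (\<Sum>i\<in>T. exp (u i))) \<le> 1"
proof -
  have le: "exp (u p) \<le> (\<Sum>i\<in>T. exp (u i))"
    using assms by (intro member_le_sum) auto
  moreover have pos: "0 < \<alpha> + (\<Sum>i\<in>T. exp (u i))"
    using le assms(3) exp_gt_zero[of "u p"] by linarith
  ultimately show "0 < exp (u p) / (\<alpha> + (\<Sum>i\<in>T. exp (u i)))"
    "exp (u p) / (\<alpha> + (\<Sum>i\<in>T. exp (u i))) \<le> 1"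
    using assms(3) by (simp_all add: pos_divide_le_eq)
qed

lemma exp_ratio_lipschitz:
  fixes u w :: "'i \<Rightarrow> real"
  assumes T: "finite T" "p \<in> T" and \<alpha>: "0 \<le> \<alpha>" and K: "\<And>i. i \<in> T \<Longrightarrow> \<bar>u i - w i\<bar> \<le> K"
  shows "\<bar>exp (u p) / (\<alpha> + (\<Sum>i\<in>T. exp (u i))) - exp (w p) / (\<alpha> + (\<Sum>i\<in>T. exp (w i)))\<bar> \<le> 2 * K"
proof -
  \<comment> \<open>mean value theorem along the segment from \<open>w\<close> to \<open>u\<close>\<close>
  define y where "y t i = w i + t * (u i - w i)" for t i
  define D where "D t = \<alpha> + (\<Sum>i\<in>T. exp (y t i))" for t
  define D' where "D' t = (\<Sum>i\<in>T. exp (y t i) * (u i - w i))" for t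
  define q where "q t = exp (y t p) / D t" for t
  have K0: "0 \<le> K"
    using K[OF T(2)] by (meson abs_ge_zero order_trans)
  have D_pos: "0 < D t" for t
    unfolding D_def using T \<alpha> by (intro add_nonneg_pos sum_pos) auto
  have q: "0 < q t" "q t \<le> 1" for t
    unfolding q_def D_def using exp_ratio_bounds[OF T \<alpha>, of "y t"] by auto
  have "(q has_real_derivative q t * ((u p - w p) - D' t / D t)) (at t)" for t
  proof -
    have "((\<lambda>t. exp (y t p)) has_real_derivative exp (y t p) * (u p - w p)) (at t)"
      "(D has_real_derivative D' t) (at t)"
      unfolding y_def D_def D'_def by (auto intro!: derivative_eq_intros)
    from DERIV_divide[OF this] show ?thesis
      using D_pos[of t] unfolding q_def by (simp add: field_simps power2_eq_square)
  qed
  then obtain z where "q 1 - q 0 = q z * ((u p - w p) - D' z / D z)"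
    using MVT2[of 0 1 q "\<lambda>t. q t * ((u p - w p) - D' t / D t)"] by auto
  moreover have "\<bar>D' z\<bar> \<le> K * D z"
  proof -
    have "\<bar>D' z\<bar> \<le> (\<Sum>i\<in>T. exp (y z i) * K)"
      unfolding D'_def using K by (intro order_trans[OF sum_abs] sum_mono) (simp add: abs_mult)
    also have "\<dots> = K * (\<Sum>i\<in>T. exp (y z i))"
      by (simp add: sum_distrib_left mult.commute)
    also have "\<dots> \<le> K * D z"
      unfolding D_def using \<alpha> K[OF T(2)] by (intro mult_left_mono) auto
    finally show ?thesis .
  qed
  moreover have "\<bar>(u p - w p) - D' z / D z\<bar> \<le> K + K"
    using K[OF T(2)] D_pos[of z] \<open>\<bar>D' z\<bar> \<le> K * D z\<close>
    by (intro order_trans[OF abs_triangle_ineq4[of "u p - w p" "D' z / D z"]] add_mono)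
      (auto simp: abs_divide divide_le_eq)
  ultimately have "\<bar>q 1 - q 0\<bar> \<le> q z * (K + K)"
    using q(1)[of z] by (simp add: abs_mult mult_left_mono)
  also have "\<dots> \<le> 2 * K"
    using mult_right_mono[OF q(2)[of z], of "K + K"] K0 by simp
  finally have "\<bar>q 1 - q 0\<bar> \<le> 2 * K" .
  then show ?thesis
    by (simp add: q_def D_def y_def)
qed

lemma bounded_lipschitz_exp_ratio:
  assumes "finite T" "p \<in> T" "0 \<le> \<alpha>" and lip: "\<And>i. i \<in> T \<Longrightarrow> C-lipschitz_on UNIV (\<lambda>x. u x i)"
  shows "bounded_lipschitz (\<lambda>x. exp (u x p) / (\<alpha> + (\<Sum>i\<in>T. exp (u x i))))"
proof -
  have "(2 * C)-lipschitz_on UNIV (\<lambda>x. exp (u x p) / (\<alpha> + (\<Sum>i\<in>T. exp (u x i))))"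
  proof (rule lipschitz_onI)
    show "dist (exp (u x p) / (\<alpha> + (\<Sum>i\<in>T. exp (u x i)))) (exp (u y p) / (\<alpha> + (\<Sum>i\<in>T. exp (u y i))))
        \<le> 2 * C * dist x y" for x y
      using exp_ratio_lipschitz[OF assms(1-3), of "u x" "u y" "C * dist x y"] lipschitz_onD[OF lip]
      by (simp add: dist_real_def mult.assoc)
    show "0 \<le> 2 * C"
      using lipschitz_on_nonneg[OF lip[OF assms(2)]] by simp
  qed
  moreover have "\<bar>exp (u x p) / (\<alpha> + (\<Sum>i\<in>T. exp (u x i)))\<bar> \<le> 1" for x
    using exp_ratio_bounds[OF assms(1-3), of "u x"] by (subst abs_of_pos) auto
  ultimately show ?thesis
    unfolding bounded_lipschitz_def by blast
qed

lemma lipschitz_on_matrix_entry: "1-lipschitz_on UNIV (\<lambda>x::real^'l::finite^'h::finite. x$h$l)"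
proof (rule lipschitz_onI)
  have entry_le: "\<bar>z$h$l\<bar> \<le> norm z" for z :: "real^'l^'h"
    by (rule order_trans[OF component_le_norm_cart Finite_Cartesian_Product.norm_nth_le])
  show "dist (x$h$l) (y$h$l) \<le> 1 * dist x y" for x y :: "real^'l^'h"
    using entry_le[of "x - y"] by (simp add: dist_norm)
qed simp

lemma bayes_softmax_eq_exp_ratio:
  fixes x :: "real^'l::finite^'h::finite"
  shows "bayes_softmax x b v h l =
     real CARD('h) * (exp (x$h$l + b$h) / (0 + (\<Sum>q\<in>UNIV. exp (x$fst q$snd q + b$fst q))))"
  by (simp add: bayes_softmax_def sum.cartesian_product UNIV_Times_UNIV[symmetric] case_prod_beta'
      del: UNIV_Times_UNIV)

lemma bounded_lipschitz_activation:
  fixes \<sigma> :: "('l::finite,'h::finite) activation"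
  assumes "\<sigma> \<in> {softmax, softmax1, bayes_softmax}"
  shows "bounded_lipschitz (\<lambda>x. \<sigma> x b v h l)"
proof -
  have shifted_entry: "1-lipschitz_on UNIV (\<lambda>x::real^'l^'h. x$i$j + b$i)" for i j
    using lipschitz_on_add[OF lipschitz_on_matrix_entry lipschitz_on_constant] by simp
  from assms consider "\<sigma> = softmax" | "\<sigma> = softmax1" | "\<sigma> = bayes_softmax"
    by blast
  then show ?thesis
  proof cases
    case 1
    have "bounded_lipschitz (\<lambda>x. exp (x$h$l) / (0 + (\<Sum>j\<in>UNIV. exp (x$h$j))))"
      by (rule bounded_lipschitz_exp_ratio[where C=1]) (auto intro: lipschitz_on_matrix_entry)
    then show ?thesis
      by (simp add: 1 softmax_def)
  next
    case 2
    have "bounded_lipschitz (\<lambda>x. exp (x$h$l) / (exp (b$h) + (\<Sum>j\<in>UNIV. exp (x$h$j))))"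
      by (rule bounded_lipschitz_exp_ratio[where C=1]) (auto intro: lipschitz_on_matrix_entry)
    from bounded_lipschitz_mult[OF bounded_lipschitz_const this, of v] show ?thesis
      by (simp add: 2 softmax1_def)
  next
    case 3
    have "bounded_lipschitz (\<lambda>x. exp (x$h$l + b$h) / (0 + (\<Sum>q\<in>UNIV. exp (x$fst q$snd q + b$fst q))))"
      using bounded_lipschitz_exp_ratio[where C=1 and T=UNIV and p="(h, l)" and \<alpha>=0
          and u="\<lambda>x q. x$fst q$snd q + b$fst q"] shifted_entry
      by simp
    from bounded_lipschitz_mult[OF bounded_lipschitz_const this, of "real CARD('h)"] show ?thesis
      by (simp add: 3 bayes_softmax_eq_exp_ratio)
  qed
qed

lemma activation_differentiable:
  fixes \<sigma> :: "('l::finite,'h::finite) activation"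
  assumes "\<sigma> \<in> {softmax, softmax1, bayes_softmax}"
  shows "(\<lambda>x. \<sigma> x b v h l) differentiable (at x)"
proof -
  have entry: "((\<lambda>x::real^'l^'h. x$i$j) has_derivative (\<lambda>d. d$i$j)) (at x)" for i j
    by (intro bounded_linear_imp_has_derivative bounded_linear_compose[OF bounded_linear_vec_nth]
        bounded_linear_vec_nth)
  have pos: "0 < (\<Sum>j\<in>UNIV. exp (x$i$j))" "0 < (\<Sum>i\<in>UNIV. \<Sum>j\<in>UNIV. exp (x$i$j + b$i))"
    for x :: "real^'l^'h" and i
    by (intro sum_pos; simp)+
  have nz: "(\<Sum>j\<in>UNIV. exp (x$i$j)) \<noteq> 0" "exp (b$i) + (\<Sum>j\<in>UNIV. exp (x$i$j)) \<noteq> 0"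
    "(\<Sum>i\<in>UNIV. \<Sum>j\<in>UNIV. exp (x$i$j + b$i)) \<noteq> 0" for x :: "real^'l^'h" and i
    using pos(1)[of x i] pos(2)[of x] exp_gt_zero[of "b$i"] by linarith+
  from assms consider "\<sigma> = softmax" | "\<sigma> = softmax1" | "\<sigma> = bayes_softmax"
    by blast
  then show ?thesis
  proof cases
    case 1
    show ?thesis unfolding 1 softmax_def differentiable_def
      by (intro exI) (auto intro!: derivative_eq_intros entry simp: nz)
  next
    case 2
    show ?thesis unfolding 2 softmax1_def differentiable_def
      by (intro exI) (auto intro!: derivative_eq_intros entry simp: nz)
  next
    case 3
    show ?thesis unfolding 3 bayes_softmax_def differentiable_def
      by (intro exI) (auto intro!: derivative_eq_intros entry simp: nz)
  qed
qed

definition score_loss :: "('l::finite,'h::finite) activation \<Rightarrow> real^'h \<Rightarrow> real \<Rightarrow> 'l \<Rightarrow> real^'l^'h \<Rightarrow> real"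
  where "score_loss \<sigma> b v eps x =
    (\<Sum>l\<in>UNIV. ((if l = eps then 1 else 0) - (1 / real CARD('h)) * (\<Sum>h\<in>UNIV. \<sigma> x b v h l))\<^sup>2)"

lemma sample_loss_eq_score_loss:
  "sample_loss \<sigma> m r b v eps cs xi = score_loss \<sigma> b v eps (m ** cs + r ** xi)"
proof -
  have "scores m r cs xi = m ** cs + r ** xi"
    by (simp add: scores_def matrix_matrix_mult_def vec_eq_iff)
  then show ?thesis
    by (simp add: sample_loss_def score_loss_def)
qed

lemma bounded_lipschitz_score_loss:
  assumes "\<And>h l. bounded_lipschitz (\<lambda>x. \<sigma> x b v h l)"
  shows "bounded_lipschitz (score_loss \<sigma> b v eps)"
proof -
  have "bounded_lipschitz (\<lambda>x. (if l = eps then 1 else 0) - (1 / real CARD('h)) * (\<Sum>h\<in>UNIV. \<sigma> x b v h l))"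
    for l
    by (rule bounded_lipschitz_diff[OF bounded_lipschitz_const
          bounded_lipschitz_mult[OF bounded_lipschitz_const bounded_lipschitz_sum[OF finite assms]]])
  from bounded_lipschitz_mult[OF this this] show ?thesis
    unfolding score_loss_def[abs_def] power2_eq_square by (rule bounded_lipschitz_sum[OF finite])
qed

lemma score_loss_differentiable:
  assumes "\<And>h l. (\<lambda>x. \<sigma> x b v h l) differentiable (at y)"
  shows "score_loss \<sigma> b v eps differentiable (at y)"
proof -
  have "(\<lambda>x. (if l = eps then 1 else 0) - (1 / real CARD('h)) * (\<Sum>h\<in>UNIV. \<sigma> x b v h l))
      differentiable (at y)" for l
    by (rule differentiable_diff[OF differentiable_const
          differentiable_mult[OF differentiable_const differentiable_sum[OF finite ballI[OF assms]]]])
  from differentiable_power[OF this] show ?thesis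
    unfolding score_loss_def[abs_def] by (rule differentiable_sum[OF finite ballI])
qed

lemma bounded_bilinear_matrix_matrix_mult [bounded_bilinear]:
  "bounded_bilinear ((**) :: real^'n::finite^'m::finite \<Rightarrow> real^'p::finite^'n \<Rightarrow> real^'p^'m)"
  unfolding bilinear_conv_bounded_bilinear[symmetric] bilinear_def
  by (auto intro!: linearI simp: vec_eq_iff matrix_matrix_mult_def sum.distrib sum_distrib_left
      algebra_simps)

lemma chistar_density_continuous:
  "continuous_on UNIV (\<lambda>z. chistar_density eps (fst z) (snd z :: real^'l::finite^'f::finite))"
proof -
  have "(\<lambda>z. chistar_density eps (fst z) (snd z :: real^'l^'f)) = (\<lambda>z. \<Prod>f\<in>UNIV. \<Prod>l\<in>UNIV.
      normal_density ((if l = eps then 1 else 0) * fst z $ f) 1 (snd z $ f $ l))"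
    \<comment> \<open>the mean written as a product, so that \<open>continuous_intros\<close> apply\<close>
    unfolding chistar_density_def by (intro ext prod.cong refl) auto
  then show ?thesis
    unfolding normal_density_def by (simp only:) (intro continuous_intros, auto)
qed

lemma expected_smoothed_loss_has_derivative_zero:
  fixes f :: "real^'l::finite^'h::finite \<Rightarrow> real" and m :: "real^'f::finite^'h"
    and P :: "(real^'f) measure"
  assumes P: "prob_space P" "sets P = sets borel"
    and f: "bounded_lipschitz f" "\<And>A. f differentiable (at A)"
  shows "((\<lambda>r::real^'h^'h. \<integral>\<theta>. (\<integral>cs. (\<integral>\<xi>. f (m ** cs + r ** \<xi>) * xi_density \<xi> \<partial>lborel)
      * chistar_density eps \<theta> cs \<partial>lborel) \<partial>P) has_derivative (\<lambda>_. 0)) (at 0)"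
proof -
  obtain B K where B: "\<And>y. \<bar>f y\<bar> \<le> B" and K: "K-lipschitz_on UNIV f"
    using f(1) unfolding bounded_lipschitz_def by blast
  define J where "J r A = (\<integral>\<xi>. f (A + r ** \<xi>) * xi_density \<xi> \<partial>lborel)"
    for r :: "real^'h^'h" and A :: "real^'l^'h"
  obtain C where "\<And>A. flat_at_zero B C (\<lambda>r::real^'h^'h. \<integral>\<xi>. f (A + r ** \<xi>) * gaussian_density 0 \<xi> \<partial>lborel)"
    by (rule flat_at_zero_smoothing[OF bounded_bilinear_matrix_matrix_mult B K f(2)
          integrable_gaussian_density gaussian_density_nonneg integral_gaussian_density
          gaussian_density_0_uminus integrable_norm_gaussian_density]) blast
  then have J_flat: "flat_at_zero B C (\<lambda>r. J r A)" for A
    unfolding J_def xi_density_eq_gaussian .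
  have "continuous_on UNIV (J r)" for r
    unfolding J_def xi_density_eq_gaussian
    by (rule continuous_on_smoothing[OF B K integrable_gaussian_density gaussian_density_nonneg
          integral_gaussian_density linear_continuous_on[OF bounded_bilinear.bounded_linear_right[OF
          bounded_bilinear_matrix_matrix_mult]]])
  then have J_cont: "continuous_on UNIV (\<lambda>cs. J r (m ** cs))" for r
    by (rule continuous_on_compose2[OF _ linear_continuous_on[OF bounded_bilinear.bounded_linear_right[OF
          bounded_bilinear_matrix_matrix_mult]]]) simp
  define W where "W r \<theta> = (\<integral>cs. J r (m ** cs) * chistar_density eps \<theta> cs \<partial>lborel)" for r \<theta>
  have W_flat: "flat_at_zero B C (\<lambda>r. W r \<theta>)" for \<theta>
    unfolding W_def chistar_density_eq_gaussian
    by (rule flat_at_zero_weighted_integral[OF integrable_gaussian_density gaussian_density_nonneg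
          integral_gaussian_density]) (use J_flat borel_measurable_continuous_onI[OF J_cont] in auto)
  have W_meas: "W r \<in> borel_measurable P" for r
    unfolding W_def
    by (rule borel_measurable_integral_kernel[OF P(2) borel_measurable_continuous_onI[OF J_cont]
          chistar_density_continuous])
  interpret P: prob_space P
    by (rule P(1))
  have "flat_at_zero B C (\<lambda>r. \<integral>\<theta>. W r \<theta> * 1 \<partial>P)"
    by (rule flat_at_zero_weighted_integral[where w="\<lambda>_. 1"]) (use W_flat W_meas P.prob_space in auto)
  then have "((\<lambda>r. \<integral>\<theta>. W r \<theta> * 1 \<partial>P) has_derivative (\<lambda>_. 0)) (at 0)"
    unfolding flat_at_zero_def by blast
  then show ?thesis
    unfolding W_def J_def mult_1_right .
qed

lemma reparam_loss_eq:
  "reparam_loss \<sigma> P m r b v = (1 / real CARD('l)) * (\<Sum>eps\<in>UNIV. \<integral>\<theta>.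
     (\<integral>cs. (\<integral>\<xi>. score_loss \<sigma> b v eps (m ** cs + r ** \<xi>) * xi_density \<xi> \<partial>lborel)
        * chistar_density eps \<theta> cs \<partial>lborel) \<partial>P)"
  for \<sigma> :: "('l::finite,'h::finite) activation" and m :: "real^'f::finite^'h"
proof -
  have inner: "(\<integral>\<xi>. sample_loss \<sigma> m r b v eps cs \<xi> * chistar_density eps \<theta> cs * xi_density \<xi> \<partial>lborel)
      = (\<integral>\<xi>. score_loss \<sigma> b v eps (m ** cs + r ** \<xi>) * xi_density \<xi> * chistar_density eps \<theta> cs \<partial>lborel)"
    for eps \<theta> cs
    by (intro Bochner_Integration.integral_cong refl) (simp add: sample_loss_eq_score_loss ac_simps)
  show ?thesis
    by (simp only: reparam_loss_def inner integral_mult_left_zero)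
qed

theorem lemma5:
  fixes P :: "(real^'f::finite) measure"
    and \<sigma> :: "('l::finite,'h::finite) activation"
    and m :: "real^'f^'h" and b :: "real^'h" and v :: real
  assumes "prob_space P" and "sets P = sets borel"
    and "\<sigma> \<in> {softmax, softmax1, bayes_softmax}"
  shows "((\<lambda>r. reparam_loss \<sigma> P m r b v) has_derivative (\<lambda>_. 0))
           (at 0 within {r :: real^'h^'h. transpose r = r})"
proof -
  define I where "I eps r = (\<integral>\<theta>. (\<integral>cs. (\<integral>\<xi>. score_loss \<sigma> b v eps (m ** cs + r ** \<xi>) * xi_density \<xi> \<partial>lborel)
      * chistar_density eps \<theta> cs \<partial>lborel) \<partial>P)" for eps and r :: "real^'h^'h"
  have I_deriv: "(I eps has_derivative (\<lambda>_. 0)) (at 0)" for eps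
    unfolding I_def using assms(3)
    by (intro expected_smoothed_loss_has_derivative_zero assms(1,2) bounded_lipschitz_score_loss
        score_loss_differentiable bounded_lipschitz_activation activation_differentiable)
  have sum_deriv: "((\<lambda>r. \<Sum>eps\<in>UNIV. I eps r) has_derivative (\<lambda>_. \<Sum>eps\<in>(UNIV :: 'l set). 0)) (at 0)"
    using has_derivative_sum[of UNIV I "\<lambda>_ _. 0" "at 0"] I_deriv by blast
  have deriv: "((\<lambda>r. (1 / real CARD('l)) * (\<Sum>eps\<in>UNIV. I eps r)) has_derivative (\<lambda>_. 0)) (at 0)"
    using has_derivative_mult_right[OF sum_deriv, of "1 / real CARD('l)"]
    unfolding sum.neutral_const mult_zero_right .
  have eq: "reparam_loss \<sigma> P m r b v = (1 / real CARD('l)) * (\<Sum>eps\<in>UNIV. I eps r)" for r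
    unfolding I_def by (rule reparam_loss_eq)
  show ?thesis
    unfolding eq by (rule has_derivative_at_withinI[OF deriv])
qed

end
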